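(* Let $A$ be a finite alphabet, $x\in A^{\mathcal{T}}$ a configuration, and let $y\in (A\times A)^{\mathcal{T}}$ be a dyadic encoding of $x$. Let $n\ge 0$, let $p:\mathbb{U}_n\to A$ be a pattern, and let $\widetilde{p}$ be the set of all maps $\mathbb{L}_n\to A$ of the form $h\mapsto \pi_2(y')_h$, where $y'$ ranges over dyadic encodings of configurations $x'$ with $x'_h=p_h$ for all $h\in\mathbb{U}_n$. Then for every tile $g$: the pattern $p$ appears in $x$ at position $g$ (i.e. $x_{g\cdot h}=p_h$ for all $h\in\mathbb{U}_n$) if and only if the map $h\mapsto \pi_2(y)_{g\cdot h}$, $h\in\mathbb{L}_n$, belongs to $\widetilde{p}$.
   Context: A $2$-fold horocyclic tessellation $\mathcal{T}$ of $\mathbb{H}^2$ (upper half-plane model) is a tiling arranged in horizontal rows; each row is a bi-infinite sequence of tiles, each tile sits above exactly two tiles of the row immediately below (its bottom-left and bottom-right children), and the row below consists exactly of the children of the tiles of the row above, in the induced order. One such tessellation is fixed. Tiles are named by words over $\{\alpha,\alpha^{-1},\beta,\beta^{-1}\}$: a fixed tile is $\varepsilon$; if a tile is $g$, then $g\cdot\beta$ is its right neighbour in its row, $g\cdot\alpha$ its bottom-left child and $g\cdot\alpha\cdot\beta$ its bottom-right child, with $\alpha\alpha^{-1}=\beta\beta^{-1}=\varepsilon$ and $\alpha\beta^2=\beta\alpha$. Configurations are maps $\mathcal{T}\to A$. Supports: $\mathbb{U}_n=\{\alpha^k\beta^q: 0\le k\le n-1,\ 0\le q\le 2^k-1\}$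 and $\mathbb{L}_n=\{\alpha^{n+1}\beta^q: 0\le q\le 2^{n+1}-1\}$; a pattern of size $n$ is a map $\mathbb{U}_n\to A$. For $z\in(A\times A)^{\mathcal{T}}$, $\pi_1(z),\pi_2(z)\in A^{\mathcal{T}}$ denote its first and second coordinates. A dyadic encoding of $x\in A^{\mathcal{T}}$ is a configuration $y\in(A\times A)^{\mathcal{T}}$ such that $\pi_1(y)=x$ and, for every tile $g$, $\pi_2(y)_{g\alpha}=x_g$ and $\pi_2(y)_{g\alpha\beta}=\pi_2(y)_g$ (it is unique unless the tessellation has a vertical fracture line, in which case one undetermined symbol propagates along it). *)

theory Defs
  imports Main "HOL-Library.FuncSet"
begin

text \<open>A 2-fold horocyclic tessellation, described by its tiles (type 't) together with
  the map alpha (bottom-left child) and beta (right neighbour in the row).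
  The bottom-right child of g is beta (alpha g).  Rows are the beta-orbits; they are
  bi-infinite and indexed by an integer level increasing downwards.\<close>

definition horocyclic2 :: "('t \<Rightarrow> 't) \<Rightarrow> ('t \<Rightarrow> 't) \<Rightarrow> bool" where
  "horocyclic2 alpha beta \<longleftrightarrow>
     bij beta
   \<and> (\<forall>g. alpha (beta g) = beta (beta (alpha g)))
   \<and> (\<forall>g n. n > 0 \<longrightarrow> (beta ^^ n) g \<noteq> g)
   \<and> (\<forall>t. \<exists>!g. t = alpha g \<or> t = beta (alpha g))
   \<and> (\<exists>lvl :: 't \<Rightarrow> int.
        (\<forall>g. lvl (beta g) = lvl g \<and> lvl (alpha g) = lvl g + 1)
      \<and> (\<forall>g h. lvl g = lvl h \<longleftrightarrow> (\<exists>n. (beta ^^ n) g = h \<or> (beta ^^ n) h = g)))"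

text \<open>The tile g . alpha^k . beta^q ; the word alpha^k beta^q is encoded by the pair (k,q).\<close>
definition act :: "('t \<Rightarrow> 't) \<Rightarrow> ('t \<Rightarrow> 't) \<Rightarrow> 't \<Rightarrow> nat \<times> nat \<Rightarrow> 't" where
  "act alpha beta g h = (beta ^^ snd h) ((alpha ^^ fst h) g)"

definition Uset :: "nat \<Rightarrow> (nat \<times> nat) set" where
  "Uset n = {(k, q). k < n \<and> q < 2 ^ k}"

definition Lset :: "nat \<Rightarrow> (nat \<times> nat) set" where
  "Lset n = {(k, q). k = n + 1 \<and> q < 2 ^ (n + 1)}"

definition dyadic_encoding ::
  "('t \<Rightarrow> 't) \<Rightarrow> ('t \<Rightarrow> 't) \<Rightarrow> ('t \<Rightarrow> 'a) \<Rightarrow> ('t \<Rightarrow> 'a \<times> 'a) \<Rightarrow> bool" where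
  "dyadic_encoding alpha beta x y \<longleftrightarrow>
     (\<forall>g. fst (y g) = x g)
   \<and> (\<forall>g. snd (y (alpha g)) = x g \<and> snd (y (beta (alpha g))) = snd (y g))"

definition ptilde ::
  "('t \<Rightarrow> 't) \<Rightarrow> ('t \<Rightarrow> 't) \<Rightarrow> 't \<Rightarrow> nat \<Rightarrow> (nat \<times> nat \<Rightarrow> 'a) \<Rightarrow> (nat \<times> nat \<Rightarrow> 'a) set" where
  "ptilde alpha beta eps n p =
     {restrict (\<lambda>h. snd (y' (act alpha beta eps h))) (Lset n) | x' y'.
        dyadic_encoding alpha beta x' y' \<and> (\<forall>h\<in>Uset n. x' (act alpha beta eps h) = p h)}"

end

theory Submission
  imports Defs
begin

text \<open>The second coordinate of a dyadic encoding at a tile records the symbol of the nearest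
  ancestor from which the tile is reached by a bottom-left step, followed by bottom-right steps
  only. Hence the value of x at g.\<alpha>^k\<beta>^r reappears below it, at the rightmost descendant
  g.\<alpha>^(n+1)\<beta>^((2r+1)2^(n-k) - 1) in L_n, and conversely the second coordinates on the layer
  L_n below a tile are determined by the pattern of size n+1 at the tile together with the
  second coordinate at the tile itself. For the forward implication, copy the pattern at g to the position of
  \<epsilon>, fill the rest with the constant snd (y g), and encode: all ancestors of \<epsilon> carry that
  constant, so the encoding agrees with y at the root and hence on the whole layer.\<close>

lemma alpha_funpow_beta:
  assumes "\<forall>g. alpha (beta g) = beta (beta (alpha g))"
  shows "alpha ((beta ^^ q) a) = (beta ^^ (2 * q)) (alpha a)"
  by (induction q) (simp_all add: assms)

lemma act_Suc_double:
  assumes "\<forall>g. alpha (beta g) = beta (beta (alpha g))"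
  shows "act alpha beta g (Suc k, 2 * q) = alpha (act alpha beta g (k, q))"
  unfolding act_def using alpha_funpow_beta[OF assms] by simp

lemma act_Suc_double_Suc:
  assumes "\<forall>g. alpha (beta g) = beta (beta (alpha g))"
  shows "act alpha beta g (Suc k, 2 * q + 1) = beta (alpha (act alpha beta g (k, q)))"
  unfolding act_def using alpha_funpow_beta[OF assms] by simp

lemma dyadic_encoding_snd_rightmost_descendant:
  assumes comm: "\<forall>g. alpha (beta g) = beta (beta (alpha g))"
    and enc: "dyadic_encoding alpha beta x y"
  shows "snd (y (act alpha beta g (Suc (k + j), (2 * r + 1) * 2 ^ j - 1)))
       = x (act alpha beta g (k, r))"
proof (induction j)
  case 0
  then show ?case
    using enc act_Suc_double[OF comm, of g k r] by (simp add: dyadic_encoding_def)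
next
  case (Suc j)
  have "(1::nat) \<le> (2 * r + 1) * 2 ^ j"
    by (simp add: Suc_le_eq)
  then have "(2 * r + 1) * 2 ^ Suc j - 1 = 2 * ((2 * r + 1) * 2 ^ j - 1) + 1"
    by simp
  then have "act alpha beta g (Suc (k + Suc j), (2 * r + 1) * 2 ^ Suc j - 1)
      = beta (alpha (act alpha beta g (Suc (k + j), (2 * r + 1) * 2 ^ j - 1)))"
    using act_Suc_double_Suc[OF comm] by simp
  then show ?case
    using enc Suc by (simp add: dyadic_encoding_def)
qed

lemma dyadic_encoding_pattern_eq_if_layer_eq:
  assumes comm: "\<forall>g. alpha (beta g) = beta (beta (alpha g))"
    and enc: "dyadic_encoding alpha beta x y" and enc': "dyadic_encoding alpha beta x' y'"
    and layer: "\<forall>q < 2 ^ Suc n.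
      snd (y (act alpha beta g (Suc n, q))) = snd (y' (act alpha beta g' (Suc n, q)))"
    and h: "h \<in> Uset n"
  shows "x (act alpha beta g h) = x' (act alpha beta g' h)"
proof -
  obtain k r where h_eq: "h = (k, r)" and "k < n" and "r < 2 ^ k"
    using h unfolding Uset_def by auto
  define q where "q = (2 * r + 1) * 2 ^ (n - k) - 1"
  have "(2 * r + 1) * 2 ^ (n - k) \<le> (2 ^ Suc k) * (2::nat) ^ (n - k)"
    using \<open>r < 2 ^ k\<close> by (intro mult_right_mono) auto
  also have "\<dots> = 2 ^ Suc n"
    using \<open>k < n\<close> by (simp flip: power_add)
  finally have "q < 2 ^ Suc n"
    unfolding q_def using zero_less_power[of "2::nat" "Suc n"] by linarith
  moreover have "Suc (k + (n - k)) = Suc n"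
    using \<open>k < n\<close> by simp
  ultimately show ?thesis
    using layer dyadic_encoding_snd_rightmost_descendant[OF comm enc, of g k "n - k" r]
      dyadic_encoding_snd_rightmost_descendant[OF comm enc', of g' k "n - k" r]
    unfolding h_eq q_def by auto
qed

lemma dyadic_encoding_layer_eq_if_pattern_eq:
  assumes comm: "\<forall>g. alpha (beta g) = beta (beta (alpha g))"
    and enc: "dyadic_encoding alpha beta x y" and enc': "dyadic_encoding alpha beta x' y'"
    and pattern: "\<forall>h\<in>Uset m. x (act alpha beta g h) = x' (act alpha beta g' h)"
    and root: "snd (y g) = snd (y' g')"
  shows "\<forall>q < 2 ^ m. snd (y (act alpha beta g (m, q))) = snd (y' (act alpha beta g' (m, q)))"
  using pattern
proof (induction m)
  case 0
  then show ?case
    using root by (simp add: act_def)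
next
  case (Suc m)
  have IH: "\<forall>q < 2 ^ m. snd (y (act alpha beta g (m, q))) = snd (y' (act alpha beta g' (m, q)))"
    using Suc by (auto simp: Uset_def)
  show ?case
  proof (intro allI impI)
    fix q :: nat
    assume "q < 2 ^ Suc m"
    have "q = 2 * (q div 2) \<or> q = 2 * (q div 2) + 1"
      by presburger
    then obtain q' where q_cases: "q = 2 * q' \<or> q = 2 * q' + 1"
      by blast
    then have "q' < 2 ^ m"
      using \<open>q < 2 ^ Suc m\<close> by auto
    from q_cases show "snd (y (act alpha beta g (Suc m, q))) = snd (y' (act alpha beta g' (Suc m, q)))"
    proof
      assume "q = 2 * q'"
      moreover have "(m, q') \<in> Uset (Suc m)"
        using \<open>q' < 2 ^ m\<close> by (simp add: Uset_def)
      ultimately show ?thesis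
        using act_Suc_double[OF comm] enc enc' Suc.prems unfolding dyadic_encoding_def by simp
    next
      assume "q = 2 * q' + 1"
      then show ?thesis
        using act_Suc_double_Suc[OF comm] enc enc' IH \<open>q' < 2 ^ m\<close>
        unfolding dyadic_encoding_def by simp
    qed
  qed
qed

lemma level_act:
  assumes "\<forall>g. lvl (beta g) = lvl g \<and> lvl (alpha g) = lvl g + (1::int)"
  shows "lvl (act alpha beta a (k, q)) = lvl a + int k"
proof -
  have "lvl ((beta ^^ q) b) = lvl b" for b
    by (induction q) (simp_all add: assms)
  moreover have "lvl ((alpha ^^ k) a) = lvl a + int k"
    by (induction k) (simp_all add: assms)
  ultimately show ?thesis
    by (simp add: act_def)
qed

lemma funpow_neq_if_no_periodic_point:
  assumes "\<forall>g n. n > 0 \<longrightarrow> (f ^^ n) g \<noteq> g" and "q < q'"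
  shows "(f ^^ q) b \<noteq> (f ^^ q') b"
proof
  assume eq: "(f ^^ q) b = (f ^^ q') b"
  have "(f ^^ q') b = (f ^^ (q' - q)) ((f ^^ q) b)"
    using \<open>q < q'\<close> by (metis funpow_add le_add_diff_inverse2 less_imp_le comp_apply)
  then show False
    using assms eq by (metis zero_less_diff)
qed

lemma inj_act:
  assumes lvl: "\<forall>g. lvl (beta g) = lvl g \<and> lvl (alpha g) = lvl g + (1::int)"
    and aperiodic: "\<forall>g n. n > 0 \<longrightarrow> (beta ^^ n) g \<noteq> g"
  shows "inj (act alpha beta a)"
proof (rule injI)
  fix h h'
  assume eq: "act alpha beta a h = act alpha beta a h'"
  obtain k q k' q' where h_eq: "h = (k, q)" "h' = (k', q')"
    by fastforce
  have "k = k'"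
    using eq level_act[OF lvl, of a] h_eq by (metis of_nat_eq_iff add_left_cancel)
  then have "(beta ^^ q) ((alpha ^^ k) a) = (beta ^^ q') ((alpha ^^ k) a)"
    using eq h_eq by (simp add: act_def)
  then have "q = q'"
    using funpow_neq_if_no_periodic_point[OF aperiodic] by (metis linorder_neq_iff)
  with \<open>k = k'\<close> h_eq show "h = h'"
    by simp
qed

definition parent :: "('t \<Rightarrow> 't) \<Rightarrow> ('t \<Rightarrow> 't) \<Rightarrow> 't \<Rightarrow> 't" where
  "parent alpha beta t = (THE g. t = alpha g \<or> t = beta (alpha g))"

context
  fixes alpha beta :: "'t \<Rightarrow> 't"
  assumes unique_parent: "\<forall>t. \<exists>!g. t = alpha g \<or> t = beta (alpha g)"
begin

lemma alpha_parent_cases: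
  "t = alpha (parent alpha beta t) \<or> t = beta (alpha (parent alpha beta t))"
  unfolding parent_def using theI'[OF unique_parent[rule_format, of t]] by simp

lemma parent_alpha [simp]: "parent alpha beta (alpha g) = g"
  unfolding parent_def by (rule the1_equality[OF unique_parent[rule_format]]) simp

lemma parent_beta_alpha [simp]: "parent alpha beta (beta (alpha g)) = g"
  unfolding parent_def by (rule the1_equality[OF unique_parent[rule_format]]) simp

lemma level_funpow_parent:
  assumes "\<forall>g. lvl (beta g) = lvl g \<and> lvl (alpha g) = lvl g + (1::int)"
  shows "lvl ((parent alpha beta ^^ i) t) = lvl t - int i"
proof (induction i)
  case (Suc i)
  have "lvl (parent alpha beta s) = lvl s - 1" for s
    using alpha_parent_cases[of s] assms by (metis add_diff_cancel_right')
  then show ?case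
    using Suc by simp
qed simp

text \<open>The second coordinate at t is x' at the parent of the first ancestor P^i t (i \<ge> 0) that
  is a bottom-left child, and d if there is none.\<close>

lemma dyadic_encoding_exists:
  assumes distinct_children: "\<forall>g. beta (alpha g) \<noteq> alpha g"
    and ancestors: "\<forall>i. x' ((parent alpha beta ^^ Suc i) e) = d"
  shows "\<exists>y'. dyadic_encoding alpha beta x' y' \<and> snd (y' e) = d"
proof -
  let ?P = "parent alpha beta"
  define left where "left t i \<longleftrightarrow> (?P ^^ i) t = alpha (?P ((?P ^^ i) t))" for t i
  define s where
    "s t = (if \<exists>i. left t i then x' (?P ((?P ^^ (LEAST i. left t i)) t)) else d)" for t
  have s_alpha: "s (alpha g) = x' g" for g
  proof -
    have "left (alpha g) 0"
      by (simp add: left_def)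
    then show ?thesis
      unfolding s_def by (auto simp: Least_eq_0)
  qed
  have s_beta_alpha: "s (beta (alpha g)) = s g" for g
  proof -
    have not_left0: "\<not> left (beta (alpha g)) 0"
      using distinct_children by (simp add: left_def)
    have parent_Suc: "(?P ^^ Suc i) (beta (alpha g)) = (?P ^^ i) g" for i
      by (simp add: funpow_Suc_right del: funpow.simps)
    have left_Suc: "left (beta (alpha g)) (Suc i) = left g i" for i
      unfolding left_def parent_Suc ..
    show ?thesis
    proof (cases "\<exists>i. left g i")
      case True
      then have "(LEAST i. left (beta (alpha g)) i) = Suc (LEAST i. left g i)"
        using Least_Suc[of "left (beta (alpha g))", OF _ not_left0] left_Suc by auto
      then show ?thesis
        unfolding s_def using True left_Suc parent_Suc by auto
    next
      case False
      then have "\<not> (\<exists>i. left (beta (alpha g)) i)"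
        using left_Suc not_left0 by (metis not0_implies_Suc)
      then show ?thesis
        unfolding s_def using False by auto
    qed
  qed
  have "x' (?P ((?P ^^ i) e)) = d" for i
    using ancestors by simp
  then have "s e = d"
    unfolding s_def by simp
  then show ?thesis
    using s_alpha s_beta_alpha by (intro exI[of _ "\<lambda>t. (x' t, s t)"]) (simp add: dyadic_encoding_def)
qed

end

lemma dyadic_encoding_transport:
  assumes tess: "horocyclic2 alpha beta"
    and enc: "dyadic_encoding alpha beta x y"
  shows "\<exists>x' y'. dyadic_encoding alpha beta x' y'
    \<and> (\<forall>h\<in>Uset m. x' (act alpha beta e h) = x (act alpha beta g h))
    \<and> (\<forall>q < 2 ^ m. snd (y' (act alpha beta e (m, q))) = snd (y (act alpha beta g (m, q))))"
proof -
  have comm: "\<forall>g. alpha (beta g) = beta (beta (alpha g))"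
    and aperiodic: "\<forall>g n. n > 0 \<longrightarrow> (beta ^^ n) g \<noteq> g"
    and unique_parent: "\<forall>t. \<exists>!g. t = alpha g \<or> t = beta (alpha g)"
    using tess unfolding horocyclic2_def by auto
  obtain lvl :: "'a \<Rightarrow> int" where lvl: "\<forall>g. lvl (beta g) = lvl g \<and> lvl (alpha g) = lvl g + 1"
    using tess unfolding horocyclic2_def by auto
  have distinct_children: "\<forall>g. beta (alpha g) \<noteq> alpha g"
    using aperiodic[rule_format, of 1] by simp
  let ?E = "act alpha beta e ` Uset m"
  define x' where
    "x' t = (if t \<in> ?E then x (act alpha beta g (inv_into (Uset m) (act alpha beta e) t))
             else snd (y g))" for t
  have "inj_on (act alpha beta e) (Uset m)"
    using inj_act[OF lvl aperiodic] by (meson inj_on_subset subset_UNIV)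
  then have x'_pattern: "\<forall>h\<in>Uset m. x' (act alpha beta e h) = x (act alpha beta g h)"
    unfolding x'_def by simp
  have "(parent alpha beta ^^ Suc i) e \<notin> ?E" for i
  proof -
    have "lvl ((parent alpha beta ^^ Suc i) e) < lvl e"
      using level_funpow_parent[OF unique_parent lvl, of "Suc i" e] by simp
    moreover have "lvl e \<le> lvl t" if "t \<in> ?E" for t
      using that level_act[OF lvl] by auto
    ultimately show ?thesis
      by (meson not_le)
  qed
  then have ancestors: "\<forall>i. x' ((parent alpha beta ^^ Suc i) e) = snd (y g)"
    unfolding x'_def by (simp only: if_False simp_thms)
  obtain y' where enc': "dyadic_encoding alpha beta x' y'" and root: "snd (y' e) = snd (y g)"
    using dyadic_encoding_exists[OF unique_parent distinct_children ancestors] by blast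
  have "\<forall>q < 2 ^ m. snd (y' (act alpha beta e (m, q))) = snd (y (act alpha beta g (m, q)))"
    using dyadic_encoding_layer_eq_if_pattern_eq[OF comm enc' enc x'_pattern root] .
  with enc' x'_pattern show ?thesis
    by blast
qed

theorem proposition1:
  fixes alpha beta :: "'t \<Rightarrow> 't" and eps :: 't
    and x :: "'t \<Rightarrow> 'a::finite" and y :: "'t \<Rightarrow> 'a \<times> 'a"
    and n :: nat and p :: "nat \<times> nat \<Rightarrow> 'a"
  assumes "horocyclic2 alpha beta"
    and "dyadic_encoding alpha beta x y"
  shows "\<forall>g. (\<forall>h\<in>Uset n. x (act alpha beta g h) = p h) \<longleftrightarrow>
             restrict (\<lambda>h. snd (y (act alpha beta g h))) (Lset n) \<in> ptilde alpha beta eps n p"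
proof (intro allI iffI)
  have comm: "\<forall>g. alpha (beta g) = beta (beta (alpha g))"
    using assms(1) unfolding horocyclic2_def by auto
  have layer_restrict_eq: "restrict (\<lambda>h. snd (y (act alpha beta g h))) (Lset n)
      = restrict (\<lambda>h. snd (y' (act alpha beta g' h))) (Lset n) \<longleftrightarrow>
    (\<forall>q < 2 ^ Suc n. snd (y (act alpha beta g (Suc n, q))) = snd (y' (act alpha beta g' (Suc n, q))))"
    for g g' and y' :: "'t \<Rightarrow> 'a \<times> 'a"
    by (auto simp: restrict_def Lset_def fun_eq_iff)
  fix g
  {
    assume pattern: "\<forall>h\<in>Uset n. x (act alpha beta g h) = p h"
    obtain x' y' where enc': "dyadic_encoding alpha beta x' y'"
      and transported: "\<forall>h\<in>Uset (Suc n). x' (act alpha beta eps h) = x (act alpha beta g h)"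
      and layer: "\<forall>q < 2 ^ Suc n.
        snd (y' (act alpha beta eps (Suc n, q))) = snd (y (act alpha beta g (Suc n, q)))"
      using dyadic_encoding_transport[OF assms] by blast
    have "\<forall>h\<in>Uset n. x' (act alpha beta eps h) = p h"
      using pattern transported by (auto simp: Uset_def)
    moreover have "restrict (\<lambda>h. snd (y (act alpha beta g h))) (Lset n)
         = restrict (\<lambda>h. snd (y' (act alpha beta eps h))) (Lset n)"
      using layer by (simp add: layer_restrict_eq)
    ultimately show "restrict (\<lambda>h. snd (y (act alpha beta g h))) (Lset n) \<in> ptilde alpha beta eps n p"
      using enc' unfolding ptilde_def by blast
  next
    assume "restrict (\<lambda>h. snd (y (act alpha beta g h))) (Lset n) \<in> ptilde alpha beta eps n p"
    then obtain x' y' where enc': "dyadic_encoding alpha beta x' y'"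
      and pattern': "\<forall>h\<in>Uset n. x' (act alpha beta eps h) = p h"
      and "restrict (\<lambda>h. snd (y (act alpha beta g h))) (Lset n)
         = restrict (\<lambda>h. snd (y' (act alpha beta eps h))) (Lset n)"
      unfolding ptilde_def by blast
    then have "\<forall>q < 2 ^ Suc n.
        snd (y (act alpha beta g (Suc n, q))) = snd (y' (act alpha beta eps (Suc n, q)))"
      by (simp add: layer_restrict_eq)
    with pattern' show "\<forall>h\<in>Uset n. x (act alpha beta g h) = p h"
      using dyadic_encoding_pattern_eq_if_layer_eq[OF comm assms(2) enc'] by simp
  }
qed

end
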